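(* Let $(P,F)$ be a convex Fuchsian polyhedron in $\mathbb{H}^3$ with invariant plane $\Pi$, and let $Z$ be a Fuchsian deformation of $(P,F)$. Decompose $Z=Z_v+Z_h$ into its vertical and horizontal components. Then $Z_v$ is invariant under $F$: for all $f\in F$ and $x\in P$, $Z_v(f x)=df\,(Z_v(x))$.
   Context: A convex Fuchsian polyhedron is a pair $(P,F)$ where $P$ is a convex polyhedral surface in $\mathbb{H}^3$ (boundary of a locally finite intersection of half-spaces) and $F$ is a discrete group of orientation-preserving isometries leaving invariant a totally geodesic plane $\Pi$, acting cocompactly without fixed points on $\Pi$, with $F(P)=P$ and $F$ acting freely on $P$. An infinitesimal isometric deformation of $P$ is a triangulation of the faces of $P$ with no new vertices plus a Killing field of $\mathbb{H}^3$ on each triangle, coinciding on common edges; it gives a vector field $Z$ on $P$. A Fuchsian Killing field is the extension of a Killing field $K$ of $\Pi$ defined by: at $x$ at distance $d$ from $\Pi$, with $p_d$ the orthogonal projection onto $\Pi$ of the equidistant surface at distance $d$ through $x$, its value is $(dp_d)^{-1}(K(p_d(x)))$. A Fuchsian deformation is an infinitesimal isometric deformation $Z$ such that for each $f\in F$ there is a Fuchsian Killing field $\vec f$ with $Z(fy)=df(\vec f(y)+Z(y))$ for all $y\in P$. At $x\in P$ the vertical direction is the tangent direction at $x$ of the geodesic through $x$ orthogonal to $\Pi$; horizontal directions are those orthogonal to it; $Z_v$ and $Z_h$ are the corresponding orthogonal components of $Z$. *)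

theory Defs
  imports "HOL-Analysis.Analysis"
begin

text \<open>Hyperboloid model of hyperbolic 3-space inside Minkowski space R^{3,1}
  (coordinates 1,2,3 spacelike, coordinate 4 timelike).\<close>

definition mink :: "real^4 \<Rightarrow> real^4 \<Rightarrow> real" where
  "mink x y = x$1 * y$1 + x$2 * y$2 + x$3 * y$3 - x$4 * y$4"

definition H3 :: "(real^4) set" where
  "H3 = {x. mink x x = -1 \<and> x$4 > 0}"

definition hplane :: "real^4 \<Rightarrow> (real^4) set" where
  "hplane a = {x \<in> H3. mink a x = 0}"

definition hhalf :: "real^4 \<Rightarrow> (real^4) set" where
  "hhalf a = {x \<in> H3. mink a x \<le> 0}"

text \<open>Hyperbolic convex hull of a finite set of points of H3 (geodesic segments, triangles):
  the radial projection onto H3 of the Euclidean convex hull.\<close>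
definition hhull :: "(real^4) set \<Rightarrow> (real^4) set" where
  "hhull S = {x \<in> H3. \<exists>c>0. \<exists>y \<in> convex hull S. x = c *\<^sub>R y}"

definition hopen_segment :: "real^4 \<Rightarrow> real^4 \<Rightarrow> (real^4) set" where
  "hopen_segment p q = {x \<in> H3. \<exists>c>0. \<exists>y \<in> open_segment p q. x = c *\<^sub>R y}"

definition hisom :: "real^4^4 \<Rightarrow> bool" where
  "hisom f \<longleftrightarrow> (\<forall>x y. mink (f *v x) (f *v y) = mink x y) \<and> (\<forall>x\<in>H3. f *v x \<in> H3)"

definition orient_pres_hisom :: "real^4^4 \<Rightarrow> bool" where
  "orient_pres_hisom f \<longleftrightarrow> hisom f \<and> det f > 0"

text \<open>Killing fields of H3: x \<mapsto> A x with A infinitesimally Lorentz.\<close>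
definition killing :: "real^4^4 \<Rightarrow> bool" where
  "killing A \<longleftrightarrow> (\<forall>x y. mink (A *v x) y + mink x (A *v y) = 0)"

text \<open>Killing field of the plane hplane n: restriction of an ambient Killing field tangent to it.\<close>
definition plane_killing :: "real^4 \<Rightarrow> real^4^4 \<Rightarrow> bool" where
  "plane_killing n A \<longleftrightarrow> killing A \<and> (\<forall>y \<in> hplane n. mink n (A *v y) = 0)"

text \<open>Orthogonal projection p_d onto hplane n of the equidistant surface through x
  (signed distance d with sinh d = mink n x, cosh d = sqrt(1 + (mink n x)^2)).\<close>
definition coshd :: "real^4 \<Rightarrow> real^4 \<Rightarrow> real" where
  "coshd n x = sqrt (1 + (mink n x)^2)"

definition hproj :: "real^4 \<Rightarrow> real^4 \<Rightarrow> real^4" where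
  "hproj n x = (1 / coshd n x) *\<^sub>R (x - mink n x *\<^sub>R n)"

text \<open>On the equidistant surface, p_d is the restriction of the affine map
  y \<mapsto> (y - sinh d n)/cosh d, so (dp_d)^{-1} w = cosh d \<cdot> w.\<close>
definition fuchsian_killing :: "real^4 \<Rightarrow> real^4^4 \<Rightarrow> real^4 \<Rightarrow> real^4" where
  "fuchsian_killing n A x = coshd n x *\<^sub>R (A *v hproj n x)"

definition locally_finite_planes :: "(real^4) set \<Rightarrow> bool" where
  "locally_finite_planes A \<longleftrightarrow>
     (\<forall>a\<in>A. mink a a = 1) \<and>
     (\<forall>x\<in>H3. \<exists>e>0. finite {a\<in>A. hplane a \<inter> ball x e \<noteq> {}})"

definition polyhedron_body :: "(real^4) set \<Rightarrow> (real^4) set" where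
  "polyhedron_body A = H3 \<inter> \<Inter> (hhalf ` A)"

definition convex_polyhedral_surface :: "(real^4) set \<Rightarrow> (real^4) set \<Rightarrow> bool" where
  "convex_polyhedral_surface A P \<longleftrightarrow>
     locally_finite_planes A \<and> P = (subtopology euclidean H3) frontier_of (polyhedron_body A)"

definition matrix_group :: "(real^4^4) set \<Rightarrow> bool" where
  "matrix_group F \<longleftrightarrow> mat 1 \<in> F \<and> (\<forall>f\<in>F. \<forall>g\<in>F. f ** g \<in> F) \<and>
     (\<forall>f\<in>F. invertible f \<and> matrix_inv f \<in> F)"

definition fuchsian_group :: "real^4 \<Rightarrow> (real^4^4) set \<Rightarrow> bool" where
  "fuchsian_group n F \<longleftrightarrow>
     matrix_group F \<and>
     (\<forall>f\<in>F. orient_pres_hisom f) \<and>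
     (\<forall>f\<in>F. (\<lambda>x. f *v x) ` hplane n = hplane n) \<and>
     (\<forall>f\<in>F. \<exists>e>0. \<forall>g\<in>F. norm (g - f) < e \<longrightarrow> g = f) \<and>
     (\<exists>K. compact K \<and> K \<subseteq> hplane n \<and> hplane n \<subseteq> (\<Union>f\<in>F. (\<lambda>x. f *v x) ` K)) \<and>
     (\<forall>f\<in>F. \<forall>x\<in>hplane n. f *v x = x \<longrightarrow> f = mat 1)"

definition convex_fuchsian_polyhedron ::
  "(real^4) set \<Rightarrow> (real^4) set \<Rightarrow> (real^4^4) set \<Rightarrow> real^4 \<Rightarrow> bool" where
  "convex_fuchsian_polyhedron A P F n \<longleftrightarrow>
     mink n n = 1 \<and> convex_polyhedral_surface A P \<and> fuchsian_group n F \<and>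
     (\<forall>f\<in>F. (\<lambda>x. f *v x) ` P = P) \<and>
     (\<forall>f\<in>F. \<forall>x\<in>P. f *v x = x \<longrightarrow> f = mat 1)"

definition poly_vertex :: "(real^4) set \<Rightarrow> real^4 \<Rightarrow> bool" where
  "poly_vertex A v \<longleftrightarrow> v \<in> (subtopology euclidean H3) frontier_of (polyhedron_body A) \<and>
     \<not> (\<exists>p\<in>polyhedron_body A. \<exists>q\<in>polyhedron_body A. p \<noteq> q \<and> v \<in> hopen_segment p q)"

text \<open>Triangulation of the faces of P without new vertices: a locally finite simplicial
  family of geodesic triangles (given by their vertex sets), each contained in a face
  (P meets a bounding plane), covering P.\<close>
definition face_triangulation :: "(real^4) set \<Rightarrow> (real^4) set \<Rightarrow> (real^4) set set \<Rightarrow> bool" where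
  "face_triangulation A P T \<longleftrightarrow>
     (\<forall>\<tau>\<in>T. card \<tau> = 3 \<and> independent \<tau> \<and> (\<forall>v\<in>\<tau>. poly_vertex A v) \<and>
             (\<exists>a\<in>A. hhull \<tau> \<subseteq> P \<inter> hplane a)) \<and>
     (\<forall>\<tau>1\<in>T. \<forall>\<tau>2\<in>T. \<tau>1 \<noteq> \<tau>2 \<longrightarrow> hhull \<tau>1 \<inter> hhull \<tau>2 = hhull (\<tau>1 \<inter> \<tau>2)) \<and>
     (\<forall>x\<in>H3. \<exists>e>0. finite {\<tau>\<in>T. hhull \<tau> \<inter> ball x e \<noteq> {}}) \<and>
     \<Union> (hhull ` T) = P"

definition infinitesimal_isometric_deformation ::
  "(real^4) set \<Rightarrow> (real^4) set \<Rightarrow> (real^4 \<Rightarrow> real^4) \<Rightarrow> bool" where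
  "infinitesimal_isometric_deformation A P Z \<longleftrightarrow>
     (\<exists>T. face_triangulation A P T \<and>
        (\<forall>\<tau>\<in>T. \<exists>K. killing K \<and> (\<forall>x\<in>hhull \<tau>. Z x = K *v x)))"

definition fuchsian_deformation ::
  "(real^4) set \<Rightarrow> (real^4) set \<Rightarrow> (real^4^4) set \<Rightarrow> real^4 \<Rightarrow> (real^4 \<Rightarrow> real^4) \<Rightarrow> bool" where
  "fuchsian_deformation A P F n Z \<longleftrightarrow>
     infinitesimal_isometric_deformation A P Z \<and>
     (\<forall>f\<in>F. \<exists>K. plane_killing n K \<and>
        (\<forall>y\<in>P. Z (f *v y) = f *v (fuchsian_killing n K y + Z y)))"

text \<open>Vertical direction at x: velocity of the geodesic through x orthogonal to hplane n,
  spanned by n + (mink n x) x; vertical / horizontal components w.r.t. the metric.\<close>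
definition vert_dir :: "real^4 \<Rightarrow> real^4 \<Rightarrow> real^4" where
  "vert_dir n x = n + mink n x *\<^sub>R x"

definition vert_comp :: "real^4 \<Rightarrow> (real^4 \<Rightarrow> real^4) \<Rightarrow> real^4 \<Rightarrow> real^4" where
  "vert_comp n Z x = (mink (Z x) (vert_dir n x) / mink (vert_dir n x) (vert_dir n x)) *\<^sub>R vert_dir n x"

definition horiz_comp :: "real^4 \<Rightarrow> (real^4 \<Rightarrow> real^4) \<Rightarrow> real^4 \<Rightarrow> real^4" where
  "horiz_comp n Z x = Z x - vert_comp n Z x"

end

theory Submission
  imports Defs
begin

text \<open>An element f of F preserves the plane, so it maps its unit normal n to \<open>\<mu> n\<close> with
  \<open>\<mu> = \<plusminus>1\<close>; hence it maps the vertical direction at x to \<open>\<mu>\<close> times the vertical direction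
  at f x. Since Z (f x) = df (K x + Z x) with K a Fuchsian Killing field, it remains to see
  that Fuchsian Killing fields are horizontal: K x is \<open>cosh d\<close> times a Killing field of the
  plane evaluated at the projection h of x, and such a field is tangent to the plane and,
  being infinitesimally isometric, orthogonal to h; both facts together make it orthogonal
  to the vertical direction n + (sinh d) x at x = (cosh d) h + (sinh d) n.\<close>

lemma mink_add_left: "mink (x + y) z = mink x z + mink y z"
  and mink_add_right: "mink z (x + y) = mink z x + mink z y"
  and mink_diff_left: "mink (x - y) z = mink x z - mink y z"
  and mink_diff_right: "mink z (x - y) = mink z x - mink z y"
  and mink_scaleR_left: "mink (c *\<^sub>R x) z = c * mink x z"
  and mink_scaleR_right: "mink z (c *\<^sub>R x) = c * mink z x"
  and mink_minus_left: "mink (- x) z = - mink x z"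
  and mink_minus_right: "mink z (- x) = - mink z x"
  by (simp_all add: mink_def algebra_simps)

lemmas mink_simps = mink_add_left mink_add_right mink_diff_left mink_diff_right
  mink_scaleR_left mink_scaleR_right mink_minus_left mink_minus_right

lemma mink_commute: "mink x y = mink y x"
  by (simp add: mink_def algebra_simps)

lemma mink_eqI:
  assumes "\<And>w. mink a w = mink b w"
  shows "a = b"
proof -
  have "a $ i = b $ i" for i :: 4
    using assms[of "axis i 1"] exhaust_4[of i] by (auto simp: mink_def axis_def)
  then show ?thesis by (simp add: vec_eq_iff)
qed

lemma timelike_unit_in_H3_or_uminus:
  assumes "mink h h = -1"
  shows "h \<in> H3 \<or> - h \<in> H3"
proof -
  have "h $ 4 \<noteq> 0"
  proof
    assume "h $ 4 = 0"
    then have "mink h h \<ge> 0" by (simp add: mink_def)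
    with assms show False by simp
  qed
  then show ?thesis using assms by (auto simp: H3_def mink_simps)
qed

lemma killing_orthogonal_self:
  assumes "killing K"
  shows "mink (K *v x) x = 0"
proof -
  have "mink (K *v x) x + mink (K *v x) x = 0"
    using assms mink_commute[of x "K *v x"] unfolding killing_def by metis
  then show ?thesis by simp
qed

lemma orthogonal_hplane_imp_orthogonal_timelike:
  assumes m: "\<forall>y\<in>hplane n. mink m y = 0"
    and w: "mink n w = 0" "mink w w < 0"
  shows "mink m w = 0"
proof -
  define r where "r = sqrt (- mink w w)"
  have r: "r > 0" "r * r = - mink w w" using w(2) by (auto simp: r_def)
  define h where "h = (1 / r) *\<^sub>R w"
  have "mink h h = -1" using r w(2) by (simp add: h_def mink_simps)
  moreover have "mink n h = 0" using w by (simp add: h_def mink_simps)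
  ultimately have "mink m h = 0"
    using timelike_unit_in_H3_or_uminus[of h] m
    by (auto simp: hplane_def mink_simps simp del: minus_equation_iff)
  then show ?thesis using r by (simp add: h_def mink_simps)
qed

text \<open>The orthogonal complement of n is spanned by its timelike vectors: for a timelike u
  orthogonal to n and small t > 0, u + t z is again timelike.\<close>

lemma orthogonal_hplane_imp_orthogonal:
  assumes nn: "mink n n = 1" and m: "\<forall>y\<in>hplane n. mink m y = 0"
    and z: "mink n z = 0"
  shows "mink m z = 0"
proof -
  define d where "d = n $ 4"
  define u where "u = axis 4 1 + d *\<^sub>R n"
  have e4: "mink (axis 4 1) n = - d" "mink n (axis 4 1) = - d" "mink (axis 4 1) (axis 4 1) = -1"
    by (simp_all add: mink_def axis_def d_def)
  have nu: "mink n u = 0" using nn e4 by (simp add: u_def mink_simps)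
  have uu: "mink u u = - 1 - d * d" using nn e4 by (simp add: u_def mink_simps)
  have mu: "mink m u = 0"
    by (rule orthogonal_hplane_imp_orthogonal_timelike[OF m nu]) (simp add: uu, smt (verit) zero_le_square)
  define a where "a = mink u z"
  define b where "b = mink z z"
  define t where "t = 1 / (1 + 2 * \<bar>a\<bar> + \<bar>b\<bar>)"
  have t: "t > 0" "t \<le> 1" "t * (1 + 2 * \<bar>a\<bar> + \<bar>b\<bar>) = 1"
    by (auto simp: t_def)
  have "mink (u + t *\<^sub>R z) (u + t *\<^sub>R z) = mink u u + 2 * t * a + t * t * b"
    using mink_commute[of z u] by (simp add: mink_simps a_def b_def algebra_simps)
  also have "\<dots> < 0"
  proof -
    have "2 * t * a \<le> 2 * t * \<bar>a\<bar>" using t by (simp add: mult_left_mono)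
    moreover have "t * t * b \<le> t * t * \<bar>b\<bar>" using t by (simp add: mult_left_mono)
    moreover have "t * t * \<bar>b\<bar> \<le> t * \<bar>b\<bar>" using t by (simp add: mult_left_le_one_le)
    moreover have "2 * t * \<bar>a\<bar> + t * \<bar>b\<bar> < 1" using t by (simp add: algebra_simps)
    ultimately show ?thesis using uu by (smt (verit) zero_le_square)
  qed
  finally have "mink m (u + t *\<^sub>R z) = 0"
    by (intro orthogonal_hplane_imp_orthogonal_timelike[OF m]) (simp_all add: mink_simps nu z)
  then show ?thesis using mu t by (simp add: mink_simps)
qed

lemma orthogonal_hplane_imp_normal_multiple:
  assumes nn: "mink n n = 1" and m: "\<forall>y\<in>hplane n. mink m y = 0"
  shows "m = mink m n *\<^sub>R n"
proof (rule mink_eqI)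
  fix w
  have "mink n (w - mink n w *\<^sub>R n) = 0" using nn by (simp add: mink_simps)
  then have "mink m (w - mink n w *\<^sub>R n) = 0"
    by (rule orthogonal_hplane_imp_orthogonal[OF nn m])
  then show "mink m w = mink (mink m n *\<^sub>R n) w" by (simp add: mink_simps)
qed

lemma plane_killing_tangent:
  assumes nn: "mink n n = 1" and K: "plane_killing n K" and w: "mink n w = 0"
  shows "mink n (K *v w) = 0"
proof -
  have kil: "killing K" and tangent: "\<forall>y\<in>hplane n. mink n (K *v y) = 0"
    using K by (auto simp: plane_killing_def)
  have "\<forall>y\<in>hplane n. mink (K *v n) y = 0"
    using tangent kil by (simp add: killing_def add_eq_0_iff)
  then have Kn: "K *v n = mink (K *v n) n *\<^sub>R n"
    by (rule orthogonal_hplane_imp_normal_multiple[OF nn])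
  have "mink (K *v n) w + mink n (K *v w) = 0"
    using kil by (simp add: killing_def)
  then have "mink n (K *v w) = - mink (K *v n) w" by linarith
  also have "\<dots> = 0" by (subst Kn) (simp add: mink_simps w)
  finally show ?thesis .
qed

lemma fuchsian_killing_orthogonal_vert_dir:
  assumes nn: "mink n n = 1" and K: "plane_killing n K" and x: "x \<in> H3"
  shows "mink (fuchsian_killing n K x) (vert_dir n x) = 0"
proof -
  define s where "s = mink n x"
  define c where "c = coshd n x"
  have c: "c > 0" by (simp add: c_def coshd_def add_pos_nonneg)
  define h where "h = hproj n x"
  have x_decomp: "x = c *\<^sub>R h + s *\<^sub>R n"
    using c by (simp add: h_def hproj_def c_def s_def)
  have nh: "mink n h = 0" using nn by (simp add: h_def hproj_def mink_simps)
  have kil: "killing K" using K by (simp add: plane_killing_def)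
  have Khn: "mink (K *v h) n = 0"
    using plane_killing_tangent[OF nn K nh] mink_commute by metis
  have Khx: "mink (K *v h) x = 0"
    by (subst x_decomp) (simp add: mink_simps Khn killing_orthogonal_self[OF kil])
  show ?thesis
    unfolding fuchsian_killing_def vert_dir_def h_def[symmetric] c_def[symmetric] s_def[symmetric]
    by (simp add: mink_simps Khn Khx)
qed

lemma isometry_preserving_hplane_normal:
  assumes nn: "mink n n = 1"
    and iso: "\<And>a b. mink (f *v a) (f *v b) = mink a b"
    and img: "(\<lambda>x. f *v x) ` hplane n = hplane n"
  obtains \<mu> where "f *v n = \<mu> *\<^sub>R n" and "\<mu> * \<mu> = 1"
proof
  have "\<forall>y\<in>hplane n. mink (f *v n) y = 0"
  proof
    fix y assume "y \<in> hplane n"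
    then obtain z where "z \<in> hplane n" "y = f *v z" using img by blast
    then show "mink (f *v n) y = 0" using iso by (simp add: hplane_def)
  qed
  then show fn: "f *v n = mink (f *v n) n *\<^sub>R n"
    by (rule orthogonal_hplane_imp_normal_multiple[OF nn])
  show "mink (f *v n) n * mink (f *v n) n = 1"
    using iso[of n n] nn by (subst (asm) (1 2) fn) (simp add: mink_simps)
qed

lemma vert_dir_isometry:
  assumes iso: "\<And>a b. mink (f *v a) (f *v b) = mink a b"
    and fn: "f *v n = \<mu> *\<^sub>R n" and \<mu>: "\<mu> * \<mu> = 1"
  shows "vert_dir n (f *v x) = \<mu> *\<^sub>R (f *v vert_dir n x)"
proof -
  have n: "n = \<mu> *\<^sub>R (f *v n)" using \<mu> by (simp add: fn)
  then have "mink n (f *v x) = \<mu> * mink n x"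
    by (metis iso mink_scaleR_left)
  then have "vert_dir n (f *v x) = \<mu> *\<^sub>R (f *v n) + (\<mu> * mink n x) *\<^sub>R (f *v x)"
    unfolding vert_dir_def using n by simp
  then show ?thesis
    by (simp add: vert_dir_def matrix_vector_right_distrib matrix_vector_mult_scaleR scaleR_add_right)
qed

lemma vert_comp_isometry:
  assumes iso: "\<And>a b. mink (f *v a) (f *v b) = mink a b"
    and fn: "f *v n = \<mu> *\<^sub>R n" and \<mu>: "\<mu> * \<mu> = 1"
    and W: "mink W (vert_dir n x) = 0"
    and Z: "Z (f *v x) = f *v (W + Z x)"
  shows "vert_comp n Z (f *v x) = f *v vert_comp n Z x"
proof -
  note vd = vert_dir_isometry[OF iso fn \<mu>]
  have "mink (Z (f *v x)) (vert_dir n (f *v x)) = \<mu> * mink (Z x) (vert_dir n x)"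
    by (simp add: Z vd mink_simps iso W)
  moreover have "mink (vert_dir n (f *v x)) (vert_dir n (f *v x))
      = mink (vert_dir n x) (vert_dir n x)"
    by (simp add: vd mink_simps iso \<mu> mult.assoc[symmetric])
  ultimately show ?thesis
    using \<mu> by (simp add: vert_comp_def vd matrix_vector_mult_scaleR mult.assoc[symmetric])
qed

theorem proposition3:
  fixes A P :: "(real^4) set" and F :: "(real^4^4) set" and n :: "real^4"
    and Z :: "real^4 \<Rightarrow> real^4"
  assumes "convex_fuchsian_polyhedron A P F n"
    and "fuchsian_deformation A P F n Z"
  shows "\<forall>f\<in>F. \<forall>x\<in>P. vert_comp n Z (f *v x) = f *v (vert_comp n Z x)"
proof (intro ballI)
  fix f x assume f: "f \<in> F" and x: "x \<in> P"
  have nn: "mink n n = 1" and "P \<subseteq> H3" and F: "fuchsian_group n F"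
    using assms(1) frontier_of_subset_topspace[of "subtopology euclidean H3" "polyhedron_body A"]
    by (auto simp: convex_fuchsian_polyhedron_def convex_polyhedral_surface_def)
  with x have xH: "x \<in> H3" by blast
  have iso: "\<And>a b. mink (f *v a) (f *v b) = mink a b"
    and img: "(\<lambda>x. f *v x) ` hplane n = hplane n"
    using F f by (auto simp: fuchsian_group_def orient_pres_hisom_def hisom_def)
  obtain \<mu> where fn: "f *v n = \<mu> *\<^sub>R n" and \<mu>: "\<mu> * \<mu> = 1"
    using isometry_preserving_hplane_normal[OF nn iso img] .
  obtain K where K: "plane_killing n K"
    and Z: "Z (f *v x) = f *v (fuchsian_killing n K x + Z x)"
    using assms(2) f x by (auto simp: fuchsian_deformation_def)
  show "vert_comp n Z (f *v x) = f *v vert_comp n Z x"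
    using vert_comp_isometry[OF iso fn \<mu> fuchsian_killing_orthogonal_vert_dir[OF nn K xH] Z] .
qed

end
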